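(* For every nonreal $z\in\mathbb C$ there exists a nonzero function $v:\Gamma\to\mathbb C$ with $(Jv)(x)=zv(x)$ for all $x\in\Gamma$. Any such $v$ satisfies $v(x)\neq0$ for every $x\in\Gamma$, and $v$ is unique up to a constant multiple.
   Context: Let $\Gamma$ be an infinite connected tree whose vertices are arranged in levels $\ell(x)\in\{0,1,2,\dots\}$: every vertex $x$ is adjacent to exactly one vertex $x'$ with $\ell(x')=\ell(x)+1$; for $\ell(x)\ge 1$ the set $N_x=\{y:\ y'=x\}$ of neighbours of $x$ on level $\ell(x)-1$ is finite and nonempty; $N_x=\emptyset$ if $\ell(x)=0$; there are no other edges. Fix $\lambda_x>0$, $\beta_x\in\mathbb R$. The Jacobi matrix $J$ acts on functions $v:\Gamma\to\mathbb C$ by $(Jv)(x)=\lambda_x v(x')+\beta_x v(x)+\sum_{y\in N_x}\lambda_y v(y)$. *)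

theory Defs
  imports Complex_Main
begin

text \<open>The tree Gamma has vertex set UNIV of type 'a. The level function is lev,
  and par x is the unique neighbour x' of x on level lev x + 1.\<close>

definition children :: "('a \<Rightarrow> 'a) \<Rightarrow> 'a \<Rightarrow> 'a set" where
  "children par x = {y. par y = x}"

definition tree_adj :: "('a \<Rightarrow> 'a) \<Rightarrow> 'a \<Rightarrow> 'a \<Rightarrow> bool" where
  "tree_adj par x y \<longleftrightarrow> y = par x \<or> x = par y"

definition level_tree :: "('a \<Rightarrow> nat) \<Rightarrow> ('a \<Rightarrow> 'a) \<Rightarrow> bool" where
  "level_tree lev par \<longleftrightarrow>
     infinite (UNIV :: 'a set) \<and>
     (\<forall>x. lev (par x) = lev x + 1) \<and>
     (\<forall>x. lev x \<ge> 1 \<longrightarrow> finite (children par x) \<and> children par x \<noteq> {}) \<and>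
     (\<forall>x. lev x = 0 \<longrightarrow> children par x = {}) \<and>
     (\<forall>x y. (tree_adj par)\<^sup>*\<^sup>* x y)"

definition jacobi :: "('a \<Rightarrow> real) \<Rightarrow> ('a \<Rightarrow> real) \<Rightarrow> ('a \<Rightarrow> 'a) \<Rightarrow> ('a \<Rightarrow> complex) \<Rightarrow> 'a \<Rightarrow> complex" where
  "jacobi lam beta par v x =
     complex_of_real (lam x) * v (par x) + complex_of_real (beta x) * v x
     + (\<Sum>y\<in>children par x. complex_of_real (lam y) * v y)"

end

theory Submission
  imports Defs
begin

text \<open>Every eigenfunction v of J for nonreal z satisfies v x = r x * v x' with a ratio r that
  is determined level by level from below: r x = lam x / (z - beta x - (sum over y in N_x of
  lam y * r y)). Inductively Im z * Im (r x) < 0, so all denominators and all ratios are nonzero.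
  Hence an eigenfunction vanishing at one vertex vanishes at its neighbours and, by connectedness,
  everywhere; applied to w - c v this gives uniqueness. Conversely any v with v x = r x * v x' is an
  eigenfunction, and such a v is obtained by fixing v at one vertex and multiplying ratios along
  the paths from x and from that vertex to a common ancestor.\<close>

lemma children_iff: "y \<in> children par x \<longleftrightarrow> par y = x"
  by (simp add: children_def)

lemma tree_adj_rtranclp_common_ancestor:
  assumes "(tree_adj par)\<^sup>*\<^sup>* x y"
  shows "\<exists>N M. (par ^^ N) x = (par ^^ M) y"
  using assms
proof (induction rule: rtranclp_induct)
  case base
  then show ?case by (metis funpow_0)
next
  case (step y y')
  then obtain N M where meet: "(par ^^ N) x = (par ^^ M) y" by blast
  from step.hyps(2) consider "y' = par y" | "y = par y'" by (auto simp: tree_adj_def)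
  then show ?case
  proof cases
    case 1
    show ?thesis
    proof (cases M)
      case 0
      then have "(par ^^ Suc N) x = (par ^^ 0) y'" using meet 1 by simp
      then show ?thesis by blast
    next
      case (Suc M')
      then have "(par ^^ N) x = (par ^^ M') y'" using meet 1 by (simp add: funpow_swap1)
      then show ?thesis by blast
    qed
  next
    case 2
    then have "(par ^^ N) x = (par ^^ Suc M) y'" using meet by (simp add: funpow_swap1)
    then show ?thesis by blast
  qed
qed

text \<open>The ratio at a vertex of level n, computed from the levels below; only the value at
  n = lev x is meaningful.\<close>
primrec ratio_on_level ::
  "('a \<Rightarrow> real) \<Rightarrow> ('a \<Rightarrow> real) \<Rightarrow> ('a \<Rightarrow> 'a) \<Rightarrow> complex \<Rightarrow> nat \<Rightarrow> 'a \<Rightarrow> complex" where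
  "ratio_on_level lam beta par z 0 x = complex_of_real (lam x) / (z - complex_of_real (beta x))"
| "ratio_on_level lam beta par z (Suc n) x = complex_of_real (lam x) / (z - complex_of_real (beta x)
     - (\<Sum>y\<in>children par x. complex_of_real (lam y) * ratio_on_level lam beta par z n y))"

locale jacobi_tree =
  fixes lev :: "'a \<Rightarrow> nat" and par :: "'a \<Rightarrow> 'a"
    and lam beta :: "'a \<Rightarrow> real" and z :: complex
  assumes lev_par: "\<And>x. lev (par x) = lev x + 1"
    and connected: "\<And>x y. (tree_adj par)\<^sup>*\<^sup>* x y"
    and lam_pos: "\<And>x. lam x > 0"
    and Im_z_nonzero: "Im z \<noteq> 0"
begin

lemma lev_child: "y \<in> children par x \<Longrightarrow> lev x = lev y + 1"
  using lev_par by (auto simp: children_iff)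

lemma lev_funpow_par: "lev ((par ^^ n) x) = lev x + n"
  by (induction n) (auto simp: lev_par)

definition ratio :: "'a \<Rightarrow> complex" where
  "ratio x = ratio_on_level lam beta par z (lev x) x"

definition denom :: "'a \<Rightarrow> complex" where
  "denom x = z - complex_of_real (beta x)
     - (\<Sum>y\<in>children par x. complex_of_real (lam y) * ratio y)"

lemma ratio_eq: "ratio x = complex_of_real (lam x) / denom x"
proof (cases "lev x")
  case 0
  then have "children par x = {}" using lev_child by fastforce
  then show ?thesis using 0 by (simp add: ratio_def denom_def)
next
  case (Suc n)
  have "(\<Sum>y\<in>children par x. complex_of_real (lam y) * ratio_on_level lam beta par z n y)
      = (\<Sum>y\<in>children par x. complex_of_real (lam y) * ratio y)"
    using Suc lev_child by (intro sum.cong) (auto simp: ratio_def)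
  then show ?thesis using Suc by (simp add: ratio_def denom_def)
qed

lemma Im_ratio_denom_sign: "Im z * Im (ratio x) < 0 \<and> Im z * Im (denom x) > 0"
proof (induction "lev x" arbitrary: x rule: less_induct)
  case less
  have children_sign: "Im z * Im (ratio y) < 0" if "y \<in> children par x" for y
    using less lev_child[OF that] by simp
  have "Im z * Im (denom x)
      = (Im z)\<^sup>2 - (\<Sum>y\<in>children par x. lam y * (Im z * Im (ratio y)))"
    by (simp add: denom_def Im_sum sum_distrib_left power2_eq_square algebra_simps)
  also have "\<dots> > 0"
  proof -
    have "(\<Sum>y\<in>children par x. lam y * (Im z * Im (ratio y))) \<le> 0"
      using children_sign lam_pos by (intro sum_nonpos) (auto intro: mult_pos_neg less_imp_le)
    moreover have "(Im z)\<^sup>2 > 0" using Im_z_nonzero by simp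
    ultimately show ?thesis by linarith
  qed
  finally have denom_sign: "Im z * Im (denom x) > 0" .
  then have norm_pos: "(Re (denom x))\<^sup>2 + (Im (denom x))\<^sup>2 > 0"
    by (auto simp: sum_power2_gt_zero_iff)
  have "Im z * Im (ratio x)
      = - lam x * (Im z * Im (denom x)) / ((Re (denom x))\<^sup>2 + (Im (denom x))\<^sup>2)"
    by (simp add: ratio_eq Im_divide power2_eq_square)
  also have "\<dots> < 0"
    using lam_pos[of x] denom_sign norm_pos by (intro divide_neg_pos) auto
  finally show ?case using denom_sign by simp
qed

lemma denom_nonzero: "denom x \<noteq> 0"
  using Im_ratio_denom_sign[of x] by auto

lemma ratio_nonzero: "ratio x \<noteq> 0"
  using Im_ratio_denom_sign[of x] by auto

lemma children_sum_ratio: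
  assumes "\<And>y. y \<in> children par x \<Longrightarrow> w y = ratio y * w x"
  shows "(\<Sum>y\<in>children par x. complex_of_real (lam y) * w y)
       = (z - complex_of_real (beta x) - denom x) * w x"
  using assms by (simp add: denom_def sum_distrib_right mult.assoc)

lemma eigenfunction_imp_ratio:
  assumes "\<forall>x. jacobi lam beta par w x = z * w x"
  shows "w x = ratio x * w (par x)"
proof (induction "lev x" arbitrary: x rule: less_induct)
  case less
  have "w y = ratio y * w x" if "y \<in> children par x" for y
    using less lev_child[OF that] that by (auto simp: children_iff)
  then have "(\<Sum>y\<in>children par x. complex_of_real (lam y) * w y)
      = (z - complex_of_real (beta x) - denom x) * w x"
    by (rule children_sum_ratio)
  then have "complex_of_real (lam x) * w (par x) + complex_of_real (beta x) * w x
      + (z - complex_of_real (beta x) - denom x) * w x = z * w x"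
    using assms[rule_format, of x] unfolding jacobi_def by simp
  then have "complex_of_real (lam x) * w (par x) = denom x * w x"
    by (simp add: algebra_simps)
  then show ?case using denom_nonzero[of x] by (simp add: ratio_eq)
qed

lemma ratio_imp_eigenfunction:
  assumes "\<forall>x. w x = ratio x * w (par x)"
  shows "jacobi lam beta par w x = z * w x"
proof -
  have "(\<Sum>y\<in>children par x. complex_of_real (lam y) * w y)
      = (z - complex_of_real (beta x) - denom x) * w x"
  proof (rule children_sum_ratio)
    fix y assume "y \<in> children par x"
    then show "w y = ratio y * w x" using assms[rule_format, of y] by (simp add: children_iff)
  qed
  moreover have "complex_of_real (lam x) * w (par x) = denom x * w x"
    using assms[rule_format, of x] denom_nonzero[of x] by (simp add: ratio_eq)
  ultimately show ?thesis by (simp add: jacobi_def algebra_simps)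
qed

lemma ratio_vanishing_propagates:
  assumes "\<forall>x. w x = ratio x * w (par x)" and "w a = 0"
  shows "w b = 0"
  using connected[of a b]
proof induction
  case base
  then show ?case using assms(2) by simp
next
  case (step y y')
  from step.hyps(2) consider "y' = par y" | "y = par y'" by (auto simp: tree_adj_def)
  then show ?case
  proof cases
    case 1
    have "w y = ratio y * w y'" using assms(1)[rule_format, of y] 1 by simp
    then show ?thesis using step.IH ratio_nonzero[of y] by simp
  next
    case 2
    then show ?thesis using assms(1)[rule_format, of y'] step.IH by simp
  qed
qed

definition ratio_prod :: "'a \<Rightarrow> nat \<Rightarrow> complex" where
  "ratio_prod x n = (\<Prod>k<n. ratio ((par ^^ k) x))"

lemma ratio_prod_0 [simp]: "ratio_prod x 0 = 1"
  by (simp add: ratio_prod_def)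

lemma ratio_prod_nonzero: "ratio_prod x n \<noteq> 0"
  by (simp add: ratio_prod_def ratio_nonzero)

lemma ratio_prod_Suc: "ratio_prod x (Suc n) = ratio x * ratio_prod (par x) n"
  unfolding ratio_prod_def prod.lessThan_Suc_shift
  by (simp add: funpow_Suc_right del: funpow.simps)

lemma ratio_prod_extend:
  assumes "(par ^^ N) x = (par ^^ M) y"
  shows "ratio_prod x (N + d) * ratio_prod y M = ratio_prod x N * ratio_prod y (M + d)"
proof (induction d)
  case 0
  then show ?case by simp
next
  case (Suc d)
  have "(par ^^ (N + d)) x = (par ^^ (M + d)) y"
    using assms by (simp add: add.commute[of _ d] funpow_add)
  then show ?case using Suc by (simp add: ratio_prod_def algebra_simps)
qed

text \<open>The quotient does not depend on the chosen common ancestor: two meeting points differ by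
  the same number of steps on both sides, since levels grow by one along par.\<close>
lemma ratio_prod_quotient_indep:
  assumes meet: "(par ^^ N) x = (par ^^ M) y" and meet': "(par ^^ N') x = (par ^^ M') y"
  shows "ratio_prod x N / ratio_prod y M = ratio_prod x N' / ratio_prod y M'"
proof -
  have levels: "lev x + N = lev y + M" "lev x + N' = lev y + M'"
    using lev_funpow_par meet meet' by metis+
  have quotient_eq: "ratio_prod x N / ratio_prod y M = ratio_prod x (N + d) / ratio_prod y (M + d)"
    if "(par ^^ N) x = (par ^^ M) y" for N M d
    using ratio_prod_extend[OF that, of d] ratio_prod_nonzero[of y]
    by (simp add: frac_eq_eq mult.commute)
  show ?thesis
  proof (cases "N \<le> N'")
    case True
    then have "N' = N + (N' - N)" "M' = M + (N' - N)" using levels by simp_all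
    then show ?thesis using quotient_eq[OF meet] by metis
  next
    case False
    then have "N = N' + (N - N')" "M = M' + (N - N')" using levels by simp_all
    then show ?thesis using quotient_eq[OF meet'] by metis
  qed
qed

text \<open>Any vertex can serve as the normalisation point; undefined is one.\<close>
definition base :: 'a where
  "base = undefined"

definition eigenvector :: "'a \<Rightarrow> complex" where
  "eigenvector x = (SOME q. \<exists>N M. (par ^^ N) x = (par ^^ M) base
                             \<and> q = ratio_prod x N / ratio_prod base M)"

lemma eigenvector_eq:
  assumes "(par ^^ N) x = (par ^^ M) base"
  shows "eigenvector x = ratio_prod x N / ratio_prod base M"
proof -
  have "\<exists>N M. (par ^^ N) x = (par ^^ M) base \<and> eigenvector x = ratio_prod x N / ratio_prod base M"
    unfolding eigenvector_def by (rule someI_ex) (use assms in blast)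
  then obtain N' M' where "(par ^^ N') x = (par ^^ M') base"
    and "eigenvector x = ratio_prod x N' / ratio_prod base M'"
    by blast
  then show ?thesis using ratio_prod_quotient_indep[OF assms] by simp
qed

lemma eigenvector_base: "eigenvector base = 1"
  using eigenvector_eq[of 0 base 0] by (simp add: ratio_prod_def)

lemma eigenvector_ratio: "eigenvector x = ratio x * eigenvector (par x)"
proof -
  obtain N M where meet: "(par ^^ N) x = (par ^^ M) base"
    using tree_adj_rtranclp_common_ancestor[OF connected] by blast
  show ?thesis
  proof (cases N)
    case 0
    then have x: "x = (par ^^ M) base" using meet by simp
    have "eigenvector (par x) = ratio_prod (par x) 0 / ratio_prod base (Suc M)"
      by (rule eigenvector_eq) (simp add: x)
    moreover have "ratio_prod base (Suc M) = ratio_prod base M * ratio x"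
      by (simp add: ratio_prod_def x)
    moreover have "eigenvector x = ratio_prod x 0 / ratio_prod base M"
      by (rule eigenvector_eq) (simp add: x)
    ultimately show ?thesis using ratio_nonzero[of x] by simp
  next
    case (Suc N')
    have "eigenvector (par x) = ratio_prod (par x) N' / ratio_prod base M"
      by (rule eigenvector_eq) (use meet Suc in \<open>simp add: funpow_swap1\<close>)
    with eigenvector_eq[OF meet] show ?thesis by (simp add: Suc ratio_prod_Suc)
  qed
qed

theorem eigenfunction_exists:
  "\<exists>v. v \<noteq> (\<lambda>_. 0) \<and> (\<forall>x. jacobi lam beta par v x = z * v x)"
proof (intro exI conjI allI)
  show "eigenvector \<noteq> (\<lambda>_. 0)"
    using eigenvector_base by (metis zero_neq_one)
  show "jacobi lam beta par eigenvector x = z * eigenvector x" for x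
    using eigenvector_ratio by (intro ratio_imp_eigenfunction) blast
qed

theorem eigenfunction_nonvanishing:
  assumes "v \<noteq> (\<lambda>_. 0)" and "\<forall>x. jacobi lam beta par v x = z * v x"
  shows "v x \<noteq> 0"
proof
  assume "v x = 0"
  moreover have "\<forall>x. v x = ratio x * v (par x)"
    using eigenfunction_imp_ratio[OF assms(2)] by blast
  ultimately have "v y = 0" for y
    by (rule ratio_vanishing_propagates[rotated])
  then show False using assms(1) by auto
qed

theorem eigenfunction_unique:
  assumes "v \<noteq> (\<lambda>_. 0)" and v: "\<forall>x. jacobi lam beta par v x = z * v x"
    and w: "\<forall>x. jacobi lam beta par w x = z * w x"
  shows "\<exists>c. w = (\<lambda>x. c * v x)"
proof
  define c where "c = w base / v base"
  have "\<forall>x. w x - c * v x = ratio x * (w (par x) - c * v (par x))"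
  proof
    fix x
    show "w x - c * v x = ratio x * (w (par x) - c * v (par x))"
      using eigenfunction_imp_ratio[OF v, of x] eigenfunction_imp_ratio[OF w, of x]
      by (simp add: algebra_simps)
  qed
  moreover have "w base - c * v base = 0"
    using eigenfunction_nonvanishing[OF assms(1,2)] by (simp add: c_def)
  ultimately have "w x - c * v x = 0" for x
    by (rule ratio_vanishing_propagates[where w = "\<lambda>x. w x - c * v x"])
  then show "w = (\<lambda>x. c * v x)" by auto
qed

end

theorem corollary2:
  fixes lev :: "'a \<Rightarrow> nat" and par :: "'a \<Rightarrow> 'a"
    and lam beta :: "'a \<Rightarrow> real" and z :: complex
  assumes "level_tree lev par"
    and "\<And>x. lam x > 0"
    and "Im z \<noteq> 0"
  shows "(\<exists>v. v \<noteq> (\<lambda>_. 0) \<and> (\<forall>x. jacobi lam beta par v x = z * v x))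
       \<and> (\<forall>v. v \<noteq> (\<lambda>_. 0) \<and> (\<forall>x. jacobi lam beta par v x = z * v x) \<longrightarrow> (\<forall>x. v x \<noteq> 0))
       \<and> (\<forall>v w. v \<noteq> (\<lambda>_. 0) \<and> (\<forall>x. jacobi lam beta par v x = z * v x)
              \<and> (\<forall>x. jacobi lam beta par w x = z * w x) \<longrightarrow> (\<exists>c. w = (\<lambda>x. c * v x)))"
proof -
  interpret jacobi_tree lev par lam beta z
    using assms by unfold_locales (auto simp: level_tree_def)
  show ?thesis
  proof (intro conjI allI impI)
    show "\<exists>v. v \<noteq> (\<lambda>_. 0) \<and> (\<forall>x. jacobi lam beta par v x = z * v x)"
      by (rule eigenfunction_exists)
  next
    fix v x
    assume "v \<noteq> (\<lambda>_. 0) \<and> (\<forall>x. jacobi lam beta par v x = z * v x)"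
    then show "v x \<noteq> 0" using eigenfunction_nonvanishing by blast
  next
    fix v w
    assume "v \<noteq> (\<lambda>_. 0) \<and> (\<forall>x. jacobi lam beta par v x = z * v x)
      \<and> (\<forall>x. jacobi lam beta par w x = z * w x)"
    then show "\<exists>c. w = (\<lambda>x. c * v x)" using eigenfunction_unique by blast
  qed
qed

end
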